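(* Let $(\mathrm{Con},\sqsubseteq,(s_i)_{i \in G})$ be a spatial constraint system whose underlying lattice $(\mathrm{Con},\sqsubseteq)$ is completely distributive. For $K \subseteq G$ define $\delta^+_K : \mathrm{Con} \to \mathrm{Con}$ by \[ \delta^+_K(c) = \bigwedge\left\{ \bigsqcup_{k \in K} s_k(a_k) \;\middle|\; (a_k)_{k \in K} \in \mathrm{Con}^K \text{ and } \bigsqcup_{k \in K} a_k \sqsupseteq c \right\}. \] Then, for any $K \subseteq G$, $\delta^+_K$ is a space function.
   Context: A constraint system is a complete lattice $(\mathrm{Con}, \sqsubseteq)$ with join $\sqcup$ (and $\bigsqcup$ for arbitrary joins), bottom $\mathit{true}$; $\bigwedge$ denotes the greatest lower bound (meet) of a set in $(\mathrm{Con},\sqsubseteq)$, and $c \sqsupseteq d$ means $d \sqsubseteq c$. A space function is a continuous self-map $f:\mathrm{Con}\to\mathrm{Con}$ (i.e., preserving joins of directed sets) such that $f(\mathit{true})=\mathit{true}$ and $f(c \sqcup d) = f(c) \sqcup f(d)$ for all $c,d$. A spatial constraint system $(\mathrm{Con},\sqsubseteq,(s_i)_{i \in G})$ is a constraint system equipped with a space function $s_i$ for each agent $i$ of a possibly infinite set $G$. $\mathrm{Con}^K$ is the set of $K$-tuples, i.e., functions $K \to \mathrm{Con}$. A lattice is completely distributive if it is complete and for any doubly indexed family $\{x_{ij}\}_{i\in I, j \in J_i}$, $\bigsqcup_{i\in I}\bigwedge_{j\in J_i} x_{ij} = \bigwedge_{f\in F}\bigsqcup_{i \in I} x_{i f(i)}$,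 where $F$ is the class of choice functions $f$ with $f(i)\in J_i$. *)

theory Defs
  imports Main
begin

(* Con is modelled as a type 'c of class complete_lattice:
   \<sqsubseteq> = \<le>, \<squnion> = sup, \<Squnion> = Sup, \<And> = Inf, true = bot. *)

definition directed_set :: "'c::complete_lattice set \<Rightarrow> bool" where
  "directed_set D \<longleftrightarrow> D \<noteq> {} \<and> (\<forall>x\<in>D. \<forall>y\<in>D. \<exists>z\<in>D. x \<le> z \<and> y \<le> z)"

definition continuous_map :: "('c::complete_lattice \<Rightarrow> 'c) \<Rightarrow> bool" where
  "continuous_map f \<longleftrightarrow> (\<forall>D. directed_set D \<longrightarrow> f (Sup D) = Sup (f ` D))"

definition space_function :: "('c::complete_lattice \<Rightarrow> 'c) \<Rightarrow> bool" where
  "space_function f \<longleftrightarrow> continuous_map f \<and> f bot = bot \<and>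
     (\<forall>c d. f (sup c d) = sup (f c) (f d))"

definition spatial_cs :: "'g set \<Rightarrow> ('g \<Rightarrow> 'c::complete_lattice \<Rightarrow> 'c) \<Rightarrow> bool" where
  "spatial_cs G s \<longleftrightarrow> (\<forall>i\<in>G. space_function (s i))"

definition completely_distributive_idx ::
    "'i itself \<Rightarrow> 'j itself \<Rightarrow> 'c::complete_lattice itself \<Rightarrow> bool" where
  "completely_distributive_idx _ _ _ \<longleftrightarrow>
     (\<forall>(I::'i set) (J::'i \<Rightarrow> 'j set) (x::'i \<Rightarrow> 'j \<Rightarrow> 'c).
        (SUP i\<in>I. INF j\<in>J i. x i j) =
        (INF f\<in>{f. \<forall>i\<in>I. f i \<in> J i}. SUP i\<in>I. x i (f i)))"

(* We instantiate the index types by 'c set and 'c; since each inner family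
   {x_ij | j \<in> J_i} is a subset of Con, this already covers arbitrary families. *)
definition completely_distributive :: "'c::complete_lattice itself \<Rightarrow> bool" where
  "completely_distributive T \<longleftrightarrow>
     completely_distributive_idx TYPE('c set) TYPE('c) T"

(* Elements of Con^K are represented as functions 'g \<Rightarrow> 'c (values off K are irrelevant). *)
definition delta_plus :: "('g \<Rightarrow> 'c::complete_lattice \<Rightarrow> 'c) \<Rightarrow> 'g set \<Rightarrow> 'c \<Rightarrow> 'c" where
  "delta_plus s K c = Inf {(SUP k\<in>K. s k (a k)) | a. c \<le> (SUP k\<in>K. a k)}"

end

theory Submission
  imports Defs
begin

text \<open>
  A space function preserves finite joins and directed joins, hence all joins; conversely a
  map preserving all joins is a space function.  So it suffices to show that \<open>\<delta>\<^sup>+\<^sub>K\<close> preserves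
  arbitrary joins.  It is monotone, which gives one inequality.  For the other, complete
  distributivity rewrites \<open>\<Squnion>\<^sub>d \<delta>\<^sup>+\<^sub>K(d)\<close> as the meet, over all choices of a witnessing tuple
  \<open>a\<^sup>d\<close> for each \<open>d\<close>, of \<open>\<Squnion>\<^sub>d \<Squnion>\<^sub>k s\<^sub>k(a\<^sup>d\<^sub>k)\<close>; the componentwise join \<open>\<Squnion>\<^sub>d a\<^sup>d\<close> witnesses \<open>\<Squnion>D\<close>,
  and since each \<open>s\<^sub>k\<close> preserves joins it yields exactly that value.
\<close>

lemma directed_set_finite_Sups: "directed_set {Sup B | B. finite B \<and> B \<subseteq> A}"
  unfolding directed_set_def
proof (intro conjI ballI)
  fix x y assume "x \<in> {Sup B | B. finite B \<and> B \<subseteq> A}" "y \<in> {Sup B | B. finite B \<and> B \<subseteq> A}"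
  then obtain B1 B2 where "x = Sup B1" "finite B1" "B1 \<subseteq> A" "y = Sup B2" "finite B2" "B2 \<subseteq> A"
    by blast
  then show "\<exists>z\<in>{Sup B | B. finite B \<and> B \<subseteq> A}. x \<le> z \<and> y \<le> z"
    by (intro bexI[of _ "Sup (B1 \<union> B2)"]) (auto intro: Sup_subset_mono)
qed blast

lemma Sup_finite_Sups:
  fixes A :: "'a::complete_lattice set"
  shows "Sup {Sup B | B. finite B \<and> B \<subseteq> A} = Sup A"
proof (rule antisym)
  show "Sup {Sup B | B. finite B \<and> B \<subseteq> A} \<le> Sup A"
    by (rule Sup_least) (blast intro: Sup_subset_mono)
  show "Sup A \<le> Sup {Sup B | B. finite B \<and> B \<subseteq> A}"
  proof (rule Sup_least)
    fix a assume "a \<in> A"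
    then have "Sup {a} \<in> {Sup B | B. finite B \<and> B \<subseteq> A}" by blast
    then show "a \<le> Sup {Sup B | B. finite B \<and> B \<subseteq> A}" by (simp add: Sup_upper)
  qed
qed

lemma space_function_Sup_finite:
  assumes "space_function f" "finite B"
  shows "f (Sup B) = Sup (f ` B)"
  using assms(2) by induction (use assms(1) in \<open>simp_all add: space_function_def\<close>)

lemma space_function_Sup:
  assumes f: "space_function f"
  shows "f (Sup A) = Sup (f ` A)"
proof -
  have finite_Sups_image:
    "f ` {Sup B | B. finite B \<and> B \<subseteq> A} = {Sup B' | B'. finite B' \<and> B' \<subseteq> f ` A}"
  proof (intro equalityI subsetI)
    fix y assume "y \<in> f ` {Sup B | B. finite B \<and> B \<subseteq> A}"
    then obtain B where "y = Sup (f ` B)" "finite B" "B \<subseteq> A"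
      using space_function_Sup_finite[OF f] by auto
    then show "y \<in> {Sup B' | B'. finite B' \<and> B' \<subseteq> f ` A}" by blast
  next
    fix y assume "y \<in> {Sup B' | B'. finite B' \<and> B' \<subseteq> f ` A}"
    then obtain B' where "y = Sup B'" "finite B'" "B' \<subseteq> f ` A" by blast
    then obtain B where "B \<subseteq> A" "finite B" "y = Sup (f ` B)"
      by (metis finite_subset_image)
    then show "y \<in> f ` {Sup B | B. finite B \<and> B \<subseteq> A}"
      using space_function_Sup_finite[OF f] by (intro image_eqI[of _ _ "Sup B"]) auto
  qed
  have "f (Sup A) = f (Sup {Sup B | B. finite B \<and> B \<subseteq> A})"
    by (simp add: Sup_finite_Sups)
  also have "\<dots> = Sup (f ` {Sup B | B. finite B \<and> B \<subseteq> A})"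
    using f directed_set_finite_Sups unfolding space_function_def continuous_map_def by blast
  also have "\<dots> = Sup (f ` A)"
    by (simp add: finite_Sups_image Sup_finite_Sups)
  finally show ?thesis .
qed

lemma space_function_iff_Sup: "space_function f \<longleftrightarrow> (\<forall>A. f (Sup A) = Sup (f ` A))"
proof
  assume Sup: "\<forall>A. f (Sup A) = Sup (f ` A)"
  have "f bot = bot" using Sup[rule_format, of "{}"] by simp
  moreover have "f (sup c d) = sup (f c) (f d)" for c d
    using Sup[rule_format, of "{c, d}"] by simp
  ultimately show "space_function f"
    using Sup unfolding space_function_def continuous_map_def by blast
qed (simp add: space_function_Sup)

lemma completely_distributive_SUP_Inf:
  fixes D :: "'c::complete_lattice set" and T :: "'c \<Rightarrow> 'c set"
  assumes "completely_distributive TYPE('c)"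
  shows "(SUP d\<in>D. Inf (T d)) = Inf {(SUP d\<in>D. g d) | g. \<forall>d\<in>D. g d \<in> T d}"
proof -
  \<comment> \<open>The definition has index type \<open>'c set\<close>, so \<open>D\<close> is reindexed by the singletons \<open>{d}\<close>.\<close>
  define I where "I = (\<lambda>d. {d}) ` D"
  define J where "J = (\<lambda>i. T (the_elem i))"
  have "(SUP i\<in>I. INF j\<in>J i. j) = (INF f\<in>{f. \<forall>i\<in>I. f i \<in> J i}. SUP i\<in>I. f i)"
    using assms unfolding completely_distributive_def completely_distributive_idx_def
    by (elim allE[of _ I] allE[of _ J] allE[of _ "\<lambda>i j. j"]) simp
  moreover have "(SUP i\<in>I. INF j\<in>J i. j) = (SUP d\<in>D. Inf (T d))"
    unfolding I_def J_def by (simp add: image_image)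
  moreover have "(\<lambda>f. SUP i\<in>I. f i) ` {f. \<forall>i\<in>I. f i \<in> J i} =
      {(SUP d\<in>D. g d) | g. \<forall>d\<in>D. g d \<in> T d}"
  proof (intro equalityI subsetI)
    fix y assume "y \<in> (\<lambda>f. SUP i\<in>I. f i) ` {f. \<forall>i\<in>I. f i \<in> J i}"
    then obtain f where "\<forall>i\<in>I. f i \<in> J i" "y = (SUP i\<in>I. f i)" by blast
    then have "\<forall>d\<in>D. f {d} \<in> T d" "y = (SUP d\<in>D. f {d})"
      unfolding I_def J_def by (auto simp: image_image)
    then show "y \<in> {(SUP d\<in>D. g d) | g. \<forall>d\<in>D. g d \<in> T d}" by blast
  next
    fix y assume "y \<in> {(SUP d\<in>D. g d) | g. \<forall>d\<in>D. g d \<in> T d}"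
    then obtain g where "\<forall>d\<in>D. g d \<in> T d" "y = (SUP d\<in>D. g d)" by blast
    then have "\<forall>i\<in>I. g (the_elem i) \<in> J i" "y = (SUP i\<in>I. g (the_elem i))"
      unfolding I_def J_def by (auto simp: image_image)
    then show "y \<in> (\<lambda>f. SUP i\<in>I. f i) ` {f. \<forall>i\<in>I. f i \<in> J i}" by blast
  qed
  ultimately show ?thesis by (simp add: image_image)
qed

lemma delta_plus_mono: "x \<le> y \<Longrightarrow> delta_plus s K x \<le> delta_plus s K y"
  unfolding delta_plus_def by (auto intro!: Inf_superset_mono dest: order_trans)

lemma delta_plus_Sup_le_SUP_witnesses:
  assumes s: "\<forall>k\<in>K. space_function (s k)"
    and a: "\<forall>d\<in>D. d \<le> (SUP k\<in>K. a d k)"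
  shows "delta_plus s K (Sup D) \<le> (SUP d\<in>D. SUP k\<in>K. s k (a d k))"
proof -
  have "Sup D \<le> (SUP k\<in>K. SUP d\<in>D. a d k)"
  proof (rule Sup_least)
    fix d assume "d \<in> D"
    then have "(SUP k\<in>K. a d k) \<le> (SUP k\<in>K. SUP d\<in>D. a d k)"
      by (intro SUP_mono' SUP_upper)
    with \<open>d \<in> D\<close> a show "d \<le> (SUP k\<in>K. SUP d\<in>D. a d k)" by (blast intro: order_trans)
  qed
  then have "delta_plus s K (Sup D) \<le> (SUP k\<in>K. s k (SUP d\<in>D. a d k))"
    unfolding delta_plus_def by (intro Inf_lower CollectI exI[of _ "\<lambda>k. SUP d\<in>D. a d k"]) simp
  also have "\<dots> = (SUP k\<in>K. SUP d\<in>D. s k (a d k))"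
    using s by (simp add: space_function_Sup image_image)
  also have "\<dots> = (SUP d\<in>D. SUP k\<in>K. s k (a d k))"
    by (rule SUP_commute)
  finally show ?thesis .
qed

lemma delta_plus_Sup:
  fixes s :: "'g \<Rightarrow> 'c::complete_lattice \<Rightarrow> 'c"
  assumes cd: "completely_distributive TYPE('c)"
    and s: "\<forall>k\<in>K. space_function (s k)"
  shows "delta_plus s K (Sup D) = Sup (delta_plus s K ` D)"
proof (rule antisym)
  define T :: "'c \<Rightarrow> 'c set" where
    "T d = {(SUP k\<in>K. s k (a k)) | a. d \<le> (SUP k\<in>K. a k)}" for d
  have witness_bound: "delta_plus s K (Sup D) \<le> (SUP d\<in>D. g d)" if g: "\<forall>d\<in>D. g d \<in> T d" for g
  proof -
    have "\<forall>d\<in>D. \<exists>a. g d = (SUP k\<in>K. s k (a k)) \<and> d \<le> (SUP k\<in>K. a k)"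
      using g unfolding T_def by blast
    from bchoice[OF this] obtain a
      where a: "\<forall>d\<in>D. g d = (SUP k\<in>K. s k (a d k)) \<and> d \<le> (SUP k\<in>K. a d k)"
      by blast
    have "(SUP d\<in>D. g d) = (SUP d\<in>D. SUP k\<in>K. s k (a d k))"
      using a by (intro SUP_cong) simp_all
    with delta_plus_Sup_le_SUP_witnesses[OF s, of D a] a show ?thesis by simp
  qed
  have "delta_plus s K (Sup D) \<le> Inf {(SUP d\<in>D. g d) | g. \<forall>d\<in>D. g d \<in> T d}"
    by (intro Inf_greatest) (use witness_bound in blast)
  also have "\<dots> = Sup (delta_plus s K ` D)"
    using completely_distributive_SUP_Inf[OF cd, where D=D and T=T]
    by (simp add: T_def delta_plus_def)
  finally show "delta_plus s K (Sup D) \<le> Sup (delta_plus s K ` D)" .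
  show "Sup (delta_plus s K ` D) \<le> delta_plus s K (Sup D)"
    by (rule Sup_least) (auto intro: delta_plus_mono Sup_upper)
qed

theorem mainTheorem6:
  fixes G :: "'g set" and s :: "'g \<Rightarrow> 'c::complete_lattice \<Rightarrow> 'c" and K :: "'g set"
  assumes "spatial_cs G s"
    and "completely_distributive TYPE('c)"
    and "K \<subseteq> G"
  shows "space_function (delta_plus s K)"
proof -
  have "\<forall>k\<in>K. space_function (s k)"
    using assms(1,3) unfolding spatial_cs_def by blast
  then have "delta_plus s K (Sup A) = Sup (delta_plus s K ` A)" for A
    by (rule delta_plus_Sup[OF assms(2)])
  then show ?thesis
    by (simp add: space_function_iff_Sup)
qed

end
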